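(* Let $h:(\mathbb{R}^n,0)\to(\mathbb{R}^n,0)$ be a weak diffeomorphism. Then $h$ is an (SSP) homeomorphism, and $h$ satisfies condition semiline-(SSP).
   Context: A weak diffeomorphism is a homeomorphism germ $h:(\mathbb{R}^n,0)\to(\mathbb{R}^n,0)$ such that both $h$ and $h^{-1}$ are differentiable at $0$ (admit a linear approximation at $0$); equivalently $h(x)=M_h(x)+O_h(x)$ near $0$ with $M_h$ an invertible linear map and $\|O_h(x)\|/\|x\|\to0$ as $x\to0$, and similarly for $h^{-1}$. For a set-germ $A\subset\mathbb{R}^k$ at $0$ with $0\in\overline A$, $D(A)=\{a\in S^{k-1}:\exists\, x_i\in A\setminus\{0\},\ x_i\to0,\ x_i/\|x_i\|\to a\}$. For sequences, $\|u_m\|\ll\|v_m\|,\|w_m\|$ means $\|u_m\|/\|v_m\|\to0$ and $\|u_m\|/\|w_m\|\to0$. $A$ satisfies condition (SSP) if for every sequence $a_m\in\mathbb{R}^k$ tending to $0$ with $\lim a_m/\|a_m\|\in D(A)$ there is a sequence $b_m\in A$ with $\|a_m-b_m\|\ll\|a_m\|,\|b_m\|$. A homeomorphism germ $h$ is an (SSP) homeomorphism if its graph $\{(x,h(x))\}\subset\mathbb{R}^n\times\mathbb{R}^n$ satisfies condition (SSP) at $(0,0)$. A semiline is a set $\{ta: t\ge0\}$ with $a\in S^{n-1}$. A homeomorphism germ $h$ satisfies condition semiline-(SSP) if for every semiline $\ell$, the image $h(\ell)$ has a unique direction, i.e. $D(h(\ell))$ is a single point. *)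

theory Defs
  imports "HOL-Analysis.Analysis"
begin

definition dirs :: "'b::real_normed_vector set \<Rightarrow> 'b set" where
  "dirs A = {a. norm a = 1 \<and> (\<exists>x::nat \<Rightarrow> 'b. (\<forall>i. x i \<in> A - {0}) \<and> x \<longlonglongrightarrow> 0 \<and>
                 (\<lambda>i. x i /\<^sub>R norm (x i)) \<longlonglongrightarrow> a)}"

definition SSP :: "'b::real_normed_vector set \<Rightarrow> bool" where
  "SSP A \<longleftrightarrow> 0 \<in> closure A \<and>
     (\<forall>(a::nat \<Rightarrow> 'b) d. a \<longlonglongrightarrow> 0 \<longrightarrow> (\<lambda>m. a m /\<^sub>R norm (a m)) \<longlonglongrightarrow> d \<longrightarrow> d \<in> dirs A \<longrightarrow>
        (\<exists>b. (\<forall>m. b m \<in> A) \<and>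
             (\<lambda>m. norm (a m - b m) / norm (a m)) \<longlonglongrightarrow> 0 \<and>
             (\<lambda>m. norm (a m - b m) / norm (b m)) \<longlonglongrightarrow> 0))"

text \<open>A homeomorphism germ (R^n,0) -> (R^n,0), represented by a homeomorphism
  h : U -> V between open neighbourhoods of 0 with inverse g and h 0 = 0.\<close>
definition hom_germ :: "('a::euclidean_space \<Rightarrow> 'a) \<Rightarrow> ('a \<Rightarrow> 'a) \<Rightarrow> 'a set \<Rightarrow> 'a set \<Rightarrow> bool" where
  "hom_germ h g U V \<longleftrightarrow> open U \<and> open V \<and> 0 \<in> U \<and> h 0 = 0 \<and> homeomorphism U V h g"

definition weak_diffeo :: "('a::euclidean_space \<Rightarrow> 'a) \<Rightarrow> ('a \<Rightarrow> 'a) \<Rightarrow> 'a set \<Rightarrow> 'a set \<Rightarrow> bool" where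
  "weak_diffeo h g U V \<longleftrightarrow> hom_germ h g U V \<and> h differentiable (at 0) \<and> g differentiable (at 0)"

definition SSP_homeo :: "('a::euclidean_space \<Rightarrow> 'a) \<Rightarrow> 'a set \<Rightarrow> bool" where
  "SSP_homeo h U \<longleftrightarrow> SSP {(x, h x) | x. x \<in> U}"

definition semiline :: "'a::real_normed_vector \<Rightarrow> 'a set" where
  "semiline a = {t *\<^sub>R a | t. t \<ge> 0}"

definition semiline_SSP :: "('a::euclidean_space \<Rightarrow> 'a) \<Rightarrow> 'a set \<Rightarrow> bool" where
  "semiline_SSP h U \<longleftrightarrow> (\<forall>a. norm a = 1 \<longrightarrow> (\<exists>!d. d \<in> dirs (h ` (semiline a \<inter> U))))"

end

theory Submission
  imports Defs
begin

text \<open>Let \<open>L\<close> be the derivative of \<open>h\<close> at 0. Differentiating \<open>g \<circ> h = id\<close> at 0 shows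
  that \<open>L\<close> is injective, and \<open>h x = L x + o(\<bar>x\<bar>)\<close>. Hence \<open>h (t a) = t L a + o(t)\<close> as
  \<open>t \<rightarrow> 0\<^sup>+\<close>, so \<open>sgn (L a)\<close> is a limit direction of the image of the semiline through \<open>a\<close>;
  it is the only one because continuity of \<open>g\<close> at 0 forces any sequence in that image tending
  to 0 to come from parameters \<open>t \<rightarrow> 0\<close>. Likewise all limit directions of the graph of \<open>h\<close>
  lie in the graph of \<open>L\<close>, and a sequence \<open>(p\<^sub>m, q\<^sub>m) \<rightarrow> 0\<close> with such a direction is within
  \<open>o(\<bar>(p\<^sub>m, q\<^sub>m)\<bar>)\<close> of the graph point \<open>(p\<^sub>m, h p\<^sub>m)\<close>, which is condition (SSP).\<close>

lemma weak_diffeo_has_injective_derivative: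
  assumes "weak_diffeo h g U V"
  obtains L where "(h has_derivative L) (at 0)" "inj L"
proof -
  have U: "open U" "0 \<in> U" and h0: "h 0 = 0" and gh: "\<And>x. x \<in> U \<Longrightarrow> g (h x) = x"
    and "h differentiable (at 0)" "g differentiable (at 0)"
    using assms unfolding weak_diffeo_def hom_germ_def homeomorphism_def by auto
  then obtain L M where L: "(h has_derivative L) (at 0)" and M: "(g has_derivative M) (at 0)"
    unfolding differentiable_def by blast
  have "((g \<circ> h) has_derivative (M \<circ> L)) (at 0)"
    using diff_chain_at[OF L] M h0 by simp
  moreover have "((g \<circ> h) has_derivative id) (at 0)"
    by (rule has_derivative_transform_within_open[OF has_derivative_id U]) (simp add: gh)
  ultimately have "M \<circ> L = id" by (rule has_derivative_unique)
  then have "inj L" by (metis inj_on_id inj_on_imageI2)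
  with L show ?thesis by (rule that)
qed

lemma has_derivative_at_0_remainder_ratio:
  fixes f :: "'a::real_normed_vector \<Rightarrow> 'b::real_normed_vector" and z :: "nat \<Rightarrow> 'c::real_normed_vector"
  assumes f: "(f has_derivative L) (at 0)" and f0: "f 0 = 0"
    and p: "p \<longlonglongrightarrow> 0" and le: "\<And>i. norm (p i) \<le> norm (z i)"
  shows "(\<lambda>i. norm (f (p i) - L (p i)) / norm (z i)) \<longlonglongrightarrow> 0"
proof -
  \<comment> \<open>\<open>\<psi> 0 = 0\<close> because division by zero yields zero, so \<open>\<psi>\<close> is continuous at 0.\<close>
  define \<psi> where "\<psi> y = norm (f y - L y) / norm y" for y
  have "(\<psi> \<longlongrightarrow> 0) (at 0)"
    using f f0 unfolding has_derivative_at \<psi>_def by simp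
  then have "isCont \<psi> 0" by (simp add: isCont_def \<psi>_def)
  then have "(\<lambda>i. \<psi> (p i)) \<longlonglongrightarrow> \<psi> 0"
    using p by (rule isCont_tendsto_compose)
  then have \<psi>p: "(\<lambda>i. \<psi> (p i)) \<longlonglongrightarrow> 0" by (simp add: \<psi>_def)
  have bound: "norm (norm (f (p i) - L (p i)) / norm (z i)) \<le> \<psi> (p i)" for i
  proof (cases "p i = 0")
    case True
    have "L 0 = 0" using has_derivative_linear[OF f] by (rule linear_0)
    then show ?thesis using True f0 by (simp add: \<psi>_def)
  next
    case False
    then show ?thesis using le[of i] by (simp add: \<psi>_def frac_le)
  qed
  show ?thesis
    using always_eventually[OF allI[OF bound]] \<psi>p by (rule Lim_null_comparison)
qed

lemma has_derivative_at_0_sgn_along_ray: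
  fixes f :: "'a::real_normed_vector \<Rightarrow> 'b::real_normed_vector"
  assumes f: "(f has_derivative L) (at 0)" and f0: "f 0 = 0" and La: "L a \<noteq> 0"
    and t: "\<And>i. t i > 0" "t \<longlonglongrightarrow> 0"
  shows "(\<lambda>i. sgn (f (t i *\<^sub>R a))) \<longlonglongrightarrow> sgn (L a)"
proof -
  have lin: "linear L" using f by (rule has_derivative_linear)
  have ta: "(\<lambda>i. t i *\<^sub>R a) \<longlonglongrightarrow> 0"
    using tendsto_scaleR[OF t(2) tendsto_const[of a]] by simp
  have "(\<lambda>i. norm (f (t i *\<^sub>R a) - L (t i *\<^sub>R a)) / norm (t i *\<^sub>R a)) \<longlonglongrightarrow> 0"
    using f f0 ta by (rule has_derivative_at_0_remainder_ratio) simp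
  then have "(\<lambda>i. norm (f (t i *\<^sub>R a) - L (t i *\<^sub>R a)) / norm (t i *\<^sub>R a) * norm a) \<longlonglongrightarrow> 0"
    by (rule tendsto_mult_left_zero)
  moreover have "norm (f (t i *\<^sub>R a) /\<^sub>R t i - L a)
      = norm (f (t i *\<^sub>R a) - L (t i *\<^sub>R a)) / norm (t i *\<^sub>R a) * norm a" for i
  proof -
    have "f (t i *\<^sub>R a) /\<^sub>R t i - L a = (f (t i *\<^sub>R a) - L (t i *\<^sub>R a)) /\<^sub>R t i"
      using t(1)[of i] by (simp add: linear.scaleR[OF lin] algebra_simps)
    moreover have "a \<noteq> 0" using La linear_0[OF lin] by auto
    ultimately show ?thesis using t(1)[of i] by (simp add: divide_simps)
  qed
  ultimately have "(\<lambda>i. norm (f (t i *\<^sub>R a) /\<^sub>R t i - L a)) \<longlonglongrightarrow> 0"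
    by presburger
  then have "(\<lambda>i. f (t i *\<^sub>R a) /\<^sub>R t i) \<longlonglongrightarrow> L a"
    by (simp only: tendsto_norm_zero_iff LIM_zero_iff)
  then have "(\<lambda>i. sgn (f (t i *\<^sub>R a) /\<^sub>R t i)) \<longlonglongrightarrow> sgn (L a)"
    using La by (rule tendsto_sgn)
  moreover have "sgn (f (t i *\<^sub>R a) /\<^sub>R t i) = sgn (f (t i *\<^sub>R a))" for i
    using t(1)[of i] by (simp add: sgn_scaleR)
  ultimately show ?thesis by simp
qed

lemma in_dirsI:
  fixes x :: "nat \<Rightarrow> 'a::real_normed_vector"
  assumes A: "eventually (\<lambda>i. x i \<in> A) sequentially" and x: "x \<longlonglongrightarrow> 0"
    and d: "(\<lambda>i. sgn (x i)) \<longlonglongrightarrow> d" "norm d = 1"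
  shows "d \<in> dirs A"
proof -
  have "d \<noteq> 0" using d(2) by auto
  then have "eventually (\<lambda>i. sgn (x i) \<noteq> 0) sequentially"
    by (rule tendsto_imp_eventually_ne[OF d(1)])
  with A have "eventually (\<lambda>i. x i \<in> A - {0}) sequentially"
    by eventually_elim auto
  then obtain N where N: "\<And>i. x (i + N) \<in> A - {0}"
    unfolding eventually_sequentially by (metis le_add2)
  have "(\<lambda>i. x (i + N)) \<longlonglongrightarrow> 0" "(\<lambda>i. sgn (x (i + N))) \<longlonglongrightarrow> d"
    using LIMSEQ_ignore_initial_segment x d(1) by blast+
  with N d(2) show ?thesis
    unfolding dirs_def sgn_div_norm by (intro CollectI conjI exI[of _ "\<lambda>i. x (i + N)"]) auto
qed

lemma sgn_derivative_in_dirs_image_semiline: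
  fixes h :: "'a::real_normed_vector \<Rightarrow> 'b::real_normed_vector"
  assumes h: "(h has_derivative L) (at 0)" "h 0 = 0" and La: "L a \<noteq> 0"
    and U: "open U" "0 \<in> U"
  shows "sgn (L a) \<in> dirs (h ` (semiline a \<inter> U))"
proof (rule in_dirsI)
  define t where "t i = inverse (real (Suc i))" for i
  have t: "\<And>i. t i > 0" "t \<longlonglongrightarrow> 0"
    using LIMSEQ_inverse_real_of_nat unfolding t_def by auto
  have ta: "(\<lambda>i. t i *\<^sub>R a) \<longlonglongrightarrow> 0"
    using tendsto_scaleR[OF t(2) tendsto_const[of a]] by simp
  have "eventually (\<lambda>i. t i *\<^sub>R a \<in> U) sequentially"
    using topological_tendstoD[OF ta U] .
  then show "eventually (\<lambda>i. h (t i *\<^sub>R a) \<in> h ` (semiline a \<inter> U)) sequentially"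
  proof eventually_elim
    case (elim i)
    then show ?case
      using t(1)[of i] unfolding semiline_def by (auto intro!: imageI less_imp_le)
  qed
  have "isCont h 0" using h(1) by (rule has_derivative_continuous)
  then show "(\<lambda>i. h (t i *\<^sub>R a)) \<longlonglongrightarrow> 0"
    using isCont_tendsto_compose[OF _ ta] h(2) by fastforce
  show "(\<lambda>i. sgn (h (t i *\<^sub>R a))) \<longlonglongrightarrow> sgn (L a)"
    using h La t by (rule has_derivative_at_0_sgn_along_ray)
  show "norm (sgn (L a)) = 1" using La by (simp add: norm_sgn)
qed

lemma dirs_image_semiline_subset:
  fixes h g :: "'a::euclidean_space \<Rightarrow> 'a"
  assumes hg: "weak_diffeo h g U V" and L: "(h has_derivative L) (at 0)" and La: "L a \<noteq> 0"
  shows "dirs (h ` (semiline a \<inter> U)) \<subseteq> {sgn (L a)}"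
proof
  fix d assume "d \<in> dirs (h ` (semiline a \<inter> U))"
  then obtain x where x: "\<And>i. x i \<in> h ` (semiline a \<inter> U) - {0}" "x \<longlonglongrightarrow> 0"
      "(\<lambda>i. sgn (x i)) \<longlonglongrightarrow> d"
    unfolding dirs_def sgn_div_norm by auto
  have h0: "h 0 = 0" and gh: "\<And>y. y \<in> U \<Longrightarrow> g (h y) = y" and "0 \<in> U"
    and "isCont g 0"
    using hg unfolding weak_diffeo_def hom_germ_def homeomorphism_def
    by (auto intro: differentiable_imp_continuous_within)
  then have g0: "g 0 = 0" by metis
  have "\<forall>i. \<exists>s. s \<ge> 0 \<and> s *\<^sub>R a \<in> U \<and> x i = h (s *\<^sub>R a)"
    using x(1) unfolding semiline_def by blast
  then obtain t where t: "\<And>i. t i \<ge> 0" "\<And>i. t i *\<^sub>R a \<in> U" "\<And>i. x i = h (t i *\<^sub>R a)"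
    by metis
  have a: "a \<noteq> 0" using La linear_0[OF has_derivative_linear[OF L]] by auto
  have tpos: "t i > 0" for i
    using x(1)[of i] t(1)[of i] t(3)[of i] h0 by (cases "t i = 0") auto
  have "(\<lambda>i. g (x i)) \<longlonglongrightarrow> g 0" using \<open>isCont g 0\<close> x(2) by (rule isCont_tendsto_compose)
  then have "(\<lambda>i. t i *\<^sub>R a) \<longlonglongrightarrow> 0" by (simp add: g0 gh t(2,3))
  then have "(\<lambda>i. norm (t i *\<^sub>R a) / norm a) \<longlonglongrightarrow> 0"
    by (intro tendsto_divide_zero tendsto_norm_zero)
  then have "t \<longlonglongrightarrow> 0" using a tpos by (simp add: less_imp_le)
  with L h0 La tpos have "(\<lambda>i. sgn (x i)) \<longlonglongrightarrow> sgn (L a)"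
    unfolding t(3) by (rule has_derivative_at_0_sgn_along_ray)
  then show "d \<in> {sgn (L a)}" using x(3) LIMSEQ_unique by blast
qed

lemma graph_defect_tendsto:
  fixes L :: "'a::real_normed_vector \<Rightarrow> 'b::real_normed_vector"
  assumes L: "bounded_linear L" and z: "(\<lambda>i. z i /\<^sub>R norm (z i)) \<longlonglongrightarrow> d"
  shows "(\<lambda>i. (snd (z i) - L (fst (z i))) /\<^sub>R norm (z i)) \<longlonglongrightarrow> snd d - L (fst d)"
proof -
  have "(\<lambda>i. snd (z i /\<^sub>R norm (z i)) - L (fst (z i /\<^sub>R norm (z i)))) \<longlonglongrightarrow> snd d - L (fst d)"
    by (intro tendsto_intros bounded_linear.tendsto[OF L] z)
  then show ?thesis
    by (simp add: linear.scaleR[OF bounded_linear.linear[OF L]] scaleR_diff_right)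
qed

lemma dirs_graph_in_graph_derivative:
  fixes f :: "'a::real_normed_vector \<Rightarrow> 'b::real_normed_vector"
  assumes f: "(f has_derivative L) (at 0)" "f 0 = 0" and d: "d \<in> dirs {(x, f x) | x. x \<in> U}"
  shows "snd d = L (fst d)"
proof -
  obtain z where z: "\<And>i. z i \<in> {(x, f x) | x. x \<in> U}" "z \<longlonglongrightarrow> 0"
      "(\<lambda>i. z i /\<^sub>R norm (z i)) \<longlonglongrightarrow> d"
    using d unfolding dirs_def by blast
  have graph: "snd (z i) = f (fst (z i))" for i using z(1)[of i] by auto
  have "(\<lambda>i. fst (z i)) \<longlonglongrightarrow> 0" using tendsto_fst[OF z(2)] by simp
  moreover have "norm (fst (z i)) \<le> norm (z i)" for i
    using norm_fst_le[of "fst (z i)" "snd (z i)"] by simp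
  ultimately have "(\<lambda>i. norm (f (fst (z i)) - L (fst (z i))) / norm (z i)) \<longlonglongrightarrow> 0"
    using f by (intro has_derivative_at_0_remainder_ratio)
  then have "(\<lambda>i. norm ((snd (z i) - L (fst (z i))) /\<^sub>R norm (z i))) \<longlonglongrightarrow> 0"
    by (simp add: graph divide_inverse mult.commute)
  then have "(\<lambda>i. (snd (z i) - L (fst (z i))) /\<^sub>R norm (z i)) \<longlonglongrightarrow> 0"
    by (simp only: tendsto_norm_zero_iff)
  moreover have "(\<lambda>i. (snd (z i) - L (fst (z i))) /\<^sub>R norm (z i)) \<longlonglongrightarrow> snd d - L (fst d)"
    using has_derivative_bounded_linear[OF f(1)] z(3) by (rule graph_defect_tendsto)
  ultimately show ?thesis using LIMSEQ_unique by fastforce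
qed

lemma norm_diff_ratio_swap:
  fixes a b :: "nat \<Rightarrow> 'a::real_normed_vector"
  assumes a: "eventually (\<lambda>m. a m \<noteq> 0) sequentially"
    and r: "(\<lambda>m. norm (a m - b m) / norm (a m)) \<longlonglongrightarrow> 0"
  shows "(\<lambda>m. norm (a m - b m) / norm (b m)) \<longlonglongrightarrow> 0"
proof (rule Lim_null_comparison)
  show "(\<lambda>m. 2 * (norm (a m - b m) / norm (a m))) \<longlonglongrightarrow> 0"
    using tendsto_mult_right_zero[OF r] .
  have "eventually (\<lambda>m. norm (a m - b m) / norm (a m) < 1/2) sequentially"
    using order_tendstoD(2)[OF r, of "1/2"] by simp
  with a show "eventually (\<lambda>m. norm (norm (a m - b m) / norm (b m))
      \<le> 2 * (norm (a m - b m) / norm (a m))) sequentially"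
  proof eventually_elim
    case (elim m)
    then have "norm (a m - b m) < norm (a m) / 2" by (simp add: divide_less_eq)
    moreover have "norm (a m) \<le> norm (b m) + norm (a m - b m)"
      using norm_triangle_ineq[of "b m" "a m - b m"] by simp
    ultimately have "norm (a m) \<le> 2 * norm (b m)" by linarith
    then have "2 * norm (a m - b m) / (2 * norm (b m)) \<le> 2 * norm (a m - b m) / norm (a m)"
      using elim(1) by (intro frac_le) auto
    then show ?case by simp
  qed
qed

lemma graph_distance_ratio_tendsto_0:
  fixes f :: "'a::real_normed_vector \<Rightarrow> 'b::real_normed_vector"
  assumes f: "(f has_derivative L) (at 0)" "f 0 = 0"
    and a: "a \<longlonglongrightarrow> 0" "(\<lambda>m. a m /\<^sub>R norm (a m)) \<longlonglongrightarrow> d" and d: "snd d = L (fst d)"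
  shows "(\<lambda>m. norm (snd (a m) - f (fst (a m))) / norm (a m)) \<longlonglongrightarrow> 0"
proof (rule Lim_null_comparison)
  have "(\<lambda>m. (snd (a m) - L (fst (a m))) /\<^sub>R norm (a m)) \<longlonglongrightarrow> 0"
    using graph_defect_tendsto[OF has_derivative_bounded_linear[OF f(1)] a(2)] d by simp
  then have "(\<lambda>m. norm ((snd (a m) - L (fst (a m))) /\<^sub>R norm (a m))) \<longlonglongrightarrow> 0"
    by (rule tendsto_norm_zero)
  then have "(\<lambda>m. norm (snd (a m) - L (fst (a m))) / norm (a m)) \<longlonglongrightarrow> 0"
    by (simp add: divide_inverse mult.commute)
  moreover have "(\<lambda>m. norm (f (fst (a m)) - L (fst (a m))) / norm (a m)) \<longlonglongrightarrow> 0"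
  proof (rule has_derivative_at_0_remainder_ratio[OF f])
    show "(\<lambda>m. fst (a m)) \<longlonglongrightarrow> 0" using tendsto_fst[OF a(1)] by simp
    show "norm (fst (a m)) \<le> norm (a m)" for m
      using norm_fst_le[of "fst (a m)" "snd (a m)"] by simp
  qed
  ultimately show "(\<lambda>m. norm (snd (a m) - L (fst (a m))) / norm (a m)
      + norm (f (fst (a m)) - L (fst (a m))) / norm (a m)) \<longlonglongrightarrow> 0"
    by (rule tendsto_add_zero)
  show "eventually (\<lambda>m. norm (norm (snd (a m) - f (fst (a m))) / norm (a m))
      \<le> norm (snd (a m) - L (fst (a m))) / norm (a m)
        + norm (f (fst (a m)) - L (fst (a m))) / norm (a m)) sequentially"
  proof (intro always_eventually allI)
    fix m
    have "norm (snd (a m) - f (fst (a m)))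
        \<le> norm (snd (a m) - L (fst (a m))) + norm (f (fst (a m)) - L (fst (a m)))"
      using norm_triangle_ineq4[of "snd (a m) - L (fst (a m))" "f (fst (a m)) - L (fst (a m))"]
      by simp
    then show "norm (norm (snd (a m) - f (fst (a m))) / norm (a m))
        \<le> norm (snd (a m) - L (fst (a m))) / norm (a m)
          + norm (f (fst (a m)) - L (fst (a m))) / norm (a m)"
      by (simp add: add_divide_distrib[symmetric] divide_right_mono)
  qed
qed

lemma SSP_graph:
  fixes f :: "'a::real_normed_vector \<Rightarrow> 'b::real_normed_vector"
  assumes f: "(f has_derivative L) (at 0)" "f 0 = 0" and U: "open U" "0 \<in> U"
  shows "SSP {(x, f x) | x. x \<in> U}"
  unfolding SSP_def
proof (intro conjI allI impI)
  let ?A = "{(x, f x) | x. x \<in> U}"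
  have "(0::'a \<times> 'b) = (0, f 0)" by (simp add: f(2) zero_prod_def)
  then have A0: "0 \<in> ?A" using U(2) by blast
  show "0 \<in> closure ?A" using closure_subset A0 by (rule subsetD)
  fix a :: "nat \<Rightarrow> 'a \<times> 'b" and d
  assume a: "a \<longlonglongrightarrow> 0" "(\<lambda>m. a m /\<^sub>R norm (a m)) \<longlonglongrightarrow> d" and d: "d \<in> dirs ?A"
  define b where "b m = (if fst (a m) \<in> U then (fst (a m), f (fst (a m))) else 0)" for m
  have "(\<lambda>m. fst (a m)) \<longlonglongrightarrow> 0" using tendsto_fst[OF a(1)] by simp
  then have "eventually (\<lambda>m. fst (a m) \<in> U) sequentially" using U by (rule topological_tendstoD)
  then have "eventually (\<lambda>m. norm (snd (a m) - f (fst (a m))) / norm (a m)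
      = norm (a m - b m) / norm (a m)) sequentially"
  proof eventually_elim
    case (elim m)
    then show ?case by (cases "a m") (simp add: b_def norm_Pair)
  qed
  moreover have "(\<lambda>m. norm (snd (a m) - f (fst (a m))) / norm (a m)) \<longlonglongrightarrow> 0"
    using graph_distance_ratio_tendsto_0[OF f a dirs_graph_in_graph_derivative[OF f d]] .
  ultimately have ab: "(\<lambda>m. norm (a m - b m) / norm (a m)) \<longlonglongrightarrow> 0"
    by (rule Lim_transform_eventually[rotated])
  have "d \<noteq> 0" using d unfolding dirs_def by auto
  then have "eventually (\<lambda>m. a m /\<^sub>R norm (a m) \<noteq> 0) sequentially"
    by (rule tendsto_imp_eventually_ne[OF a(2)])
  then have "eventually (\<lambda>m. a m \<noteq> 0) sequentially" by eventually_elim auto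
  then have "(\<lambda>m. norm (a m - b m) / norm (b m)) \<longlonglongrightarrow> 0"
    using ab by (rule norm_diff_ratio_swap)
  moreover have "\<forall>m. b m \<in> ?A" using A0 by (auto simp: b_def)
  ultimately show "\<exists>b. (\<forall>m. b m \<in> ?A) \<and> (\<lambda>m. norm (a m - b m) / norm (a m)) \<longlonglongrightarrow> 0
      \<and> (\<lambda>m. norm (a m - b m) / norm (b m)) \<longlonglongrightarrow> 0"
    using ab by (intro exI[of _ b] conjI)
qed

theorem theorem4p19:
  fixes h g :: "'a::euclidean_space \<Rightarrow> 'a" and U V :: "'a set"
  assumes "weak_diffeo h g U V"
  shows "SSP_homeo h U \<and> semiline_SSP h U"
proof
  obtain L where L: "(h has_derivative L) (at 0)" "inj L"
    using assms by (rule weak_diffeo_has_injective_derivative)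
  have h: "open U" "0 \<in> U" "h 0 = 0"
    using assms unfolding weak_diffeo_def hom_germ_def by auto
  show "SSP_homeo h U"
    unfolding SSP_homeo_def using L(1) h(3,1,2) by (rule SSP_graph)
  show "semiline_SSP h U"
    unfolding semiline_SSP_def
  proof (intro allI impI)
    fix a :: 'a assume "norm a = 1"
    then have "L a \<noteq> 0"
      using L linear_0[OF has_derivative_linear[OF L(1)]] by (metis inj_eq norm_zero zero_neq_one)
    then have "dirs (h ` (semiline a \<inter> U)) = {sgn (L a)}"
      using sgn_derivative_in_dirs_image_semiline[OF L(1) h(3) _ h(1,2)]
        dirs_image_semiline_subset[OF assms L(1)] by blast
    then show "\<exists>!d. d \<in> dirs (h ` (semiline a \<inter> U))" by auto
  qed
qed

end
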